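(* Let $S$ be a $1$-synchronizable system. Let $\tau\in T_0(S)$ and $a_1,\dots,a_n\in\Sigma_M$ be such that $\tau\cdot !a_1\cdots !a_n\in T_n(S)$ and $\mathrm{src}(a_i)=\mathrm{src}(a_j)$ for all $i,j\in\{1,\dots,n\}$. Then $\tau\cdot !?a_1\cdots !?a_n\in T_0(S)$.
   Context: A message set $M=(\Sigma_M,N,\mathrm{src},\mathrm{dst})$: finite set of messages, $N\ge1$ peers, $\mathrm{src}(a)\neq\mathrm{dst}(a)\in\{1,\dots,N\}$. Actions $!a$ (by peer $\mathrm{src}(a)$), $?a$ (by peer $\mathrm{dst}(a)$); traces are finite action sequences; $!?a$ abbreviates $!a\cdot?a$. For a trace $\tau$, $\pi_!(\tau)$ is the sequence of sent messages; $\mathrm{buf}_{i\to j}(\tau)$ is the word $w$ (if any) with (sent on $i\to j$) $=$ (received on $i\to j$)$\cdot w$. $\tau$ is FIFO ($k$-bounded FIFO) if for all $i,j$ and prefixes $\tau'$, $\mathrm{buf}_{i\to j}(\tau')$ is defined (and has length $\le k$); synchronous if of the form $!?a_1\cdots!?a_k$. A system $S=(P_1,\dots,P_N)$: finite automata $P_i$ (all states accepting) over actions of peer $i$, with one FIFO channel per ordered pair $i\neq j$. A configuration: one control state per peer and contents $w_{i,j}$ of channels; stable if all channels empty. $!a$ ($\mathrm{src}(a)=i,\mathrm{dst}(a)=j$) moves $P_i$ and appends $a$ to $w_{i,j}$; $?a$ moves $P_j$ and removes $a$ from the head of $w_{i,j}$; $c_0$ is the initial configuration. $T_k(S)$ ($k\ge1$):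 $k$-bounded FIFO traces $\tau$ with $c_0\xrightarrow{\tau}c$ for some $c$; $T_0(S)$: synchronous such traces; $T_\omega(S)=\bigcup_kT_k(S)$. $ST_k(S)=\{\pi_!(\tau)\mid\tau\in T_k(S)\}\cup\{(\pi_!(\tau),c)\mid c_0\xrightarrow{\tau}c,\ c\text{ stable},\ \tau\in T_k(S)\}$; $S$ is $1$-synchronizable if $ST_0(S)=ST_1(S)$. (Here $n$ in the claim denotes a number of messages, not the number of peers.) *)

theory Defs
  imports Main "HOL-Library.Sublist"
begin

datatype 'm act = Send 'm | Recv 'm

definition message_set :: "'m set \<Rightarrow> nat \<Rightarrow> ('m \<Rightarrow> nat) \<Rightarrow> ('m \<Rightarrow> nat) \<Rightarrow> bool" where
  "message_set Msgs N src dst \<longleftrightarrow> finite Msgs \<and> N \<ge> 1 \<and>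
     (\<forall>a\<in>Msgs. src a \<noteq> dst a \<and> src a \<in> {1..N} \<and> dst a \<in> {1..N})"

definition actor :: "('m \<Rightarrow> nat) \<Rightarrow> ('m \<Rightarrow> nat) \<Rightarrow> 'm act \<Rightarrow> nat" where
  "actor src dst x = (case x of Send a \<Rightarrow> src a | Recv a \<Rightarrow> dst a)"

definition msg_of :: "'m act \<Rightarrow> 'm" where
  "msg_of x = (case x of Send a \<Rightarrow> a | Recv a \<Rightarrow> a)"

(* A system S = (P_1,...,P_N): peer i is a finite automaton with state set Q i,
   initial state q0 i and transition relation delta i over actions of peer i
   (all states accepting). *)
definition system ::
  "'m set \<Rightarrow> nat \<Rightarrow> ('m \<Rightarrow> nat) \<Rightarrow> ('m \<Rightarrow> nat) \<Rightarrow>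
   (nat \<Rightarrow> 's set) \<Rightarrow> (nat \<Rightarrow> 's) \<Rightarrow> (nat \<Rightarrow> ('s \<times> 'm act \<times> 's) set) \<Rightarrow> bool" where
  "system Msgs N src dst Q q0 delta \<longleftrightarrow> message_set Msgs N src dst \<and>
     (\<forall>i. delta i \<noteq> {} \<longrightarrow> i \<in> {1..N}) \<and>
     (\<forall>i\<in>{1..N}. finite (Q i) \<and> q0 i \<in> Q i \<and>
        (\<forall>(q, x, q') \<in> delta i. q \<in> Q i \<and> q' \<in> Q i \<and> msg_of x \<in> Msgs \<and> actor src dst x = i))"

(* Configurations: control state of each peer, and contents w i j of channel i -> j *)
type_synonym ('s, 'm) config = "(nat \<Rightarrow> 's) \<times> (nat \<Rightarrow> nat \<Rightarrow> 'm list)"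

definition init_config :: "(nat \<Rightarrow> 's) \<Rightarrow> ('s, 'm) config" where
  "init_config q0 = (q0, \<lambda>i j. [])"

definition stable :: "nat \<Rightarrow> ('s, 'm) config \<Rightarrow> bool" where
  "stable N c \<longleftrightarrow> (\<forall>i\<in>{1..N}. \<forall>j\<in>{1..N}. i \<noteq> j \<longrightarrow> snd c i j = [])"

inductive step ::
  "('m \<Rightarrow> nat) \<Rightarrow> ('m \<Rightarrow> nat) \<Rightarrow> (nat \<Rightarrow> ('s \<times> 'm act \<times> 's) set) \<Rightarrow>
   ('s, 'm) config \<Rightarrow> 'm act \<Rightarrow> ('s, 'm) config \<Rightarrow> bool"
  for src dst delta where
  send: "(st (src a), Send a, q') \<in> delta (src a) \<Longrightarrow>
    step src dst delta (st, w) (Send a)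
      (st(src a := q'), w(src a := (w (src a))(dst a := w (src a) (dst a) @ [a])))"
| recv: "(st (dst a), Recv a, q') \<in> delta (dst a) \<Longrightarrow> w (src a) (dst a) = a # u \<Longrightarrow>
    step src dst delta (st, w) (Recv a)
      (st(dst a := q'), w(src a := (w (src a))(dst a := u)))"

inductive run ::
  "('m \<Rightarrow> nat) \<Rightarrow> ('m \<Rightarrow> nat) \<Rightarrow> (nat \<Rightarrow> ('s \<times> 'm act \<times> 's) set) \<Rightarrow>
   ('s, 'm) config \<Rightarrow> 'm act list \<Rightarrow> ('s, 'm) config \<Rightarrow> bool"
  for src dst delta where
  run_nil: "run src dst delta c [] c"
| run_cons: "step src dst delta c x c' \<Longrightarrow> run src dst delta c' t c'' \<Longrightarrow>
    run src dst delta c (x # t) c''"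

fun sends :: "'m act list \<Rightarrow> 'm list" where
  "sends [] = []"
| "sends (Send a # t) = a # sends t"
| "sends (Recv a # t) = sends t"

fun recvs :: "'m act list \<Rightarrow> 'm list" where
  "recvs [] = []"
| "recvs (Recv a # t) = a # recvs t"
| "recvs (Send a # t) = recvs t"

definition sent_on :: "('m \<Rightarrow> nat) \<Rightarrow> ('m \<Rightarrow> nat) \<Rightarrow> nat \<Rightarrow> nat \<Rightarrow> 'm act list \<Rightarrow> 'm list" where
  "sent_on src dst i j t = filter (\<lambda>a. src a = i \<and> dst a = j) (sends t)"

definition recv_on :: "('m \<Rightarrow> nat) \<Rightarrow> ('m \<Rightarrow> nat) \<Rightarrow> nat \<Rightarrow> nat \<Rightarrow> 'm act list \<Rightarrow> 'm list" where
  "recv_on src dst i j t = filter (\<lambda>a. src a = i \<and> dst a = j) (recvs t)"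

definition buf :: "('m \<Rightarrow> nat) \<Rightarrow> ('m \<Rightarrow> nat) \<Rightarrow> nat \<Rightarrow> nat \<Rightarrow> 'm act list \<Rightarrow> 'm list option" where
  "buf src dst i j t =
     (if \<exists>w. sent_on src dst i j t = recv_on src dst i j t @ w
      then Some (THE w. sent_on src dst i j t = recv_on src dst i j t @ w) else None)"

definition bounded_fifo :: "('m \<Rightarrow> nat) \<Rightarrow> ('m \<Rightarrow> nat) \<Rightarrow> nat \<Rightarrow> 'm act list \<Rightarrow> bool" where
  "bounded_fifo src dst k t \<longleftrightarrow>
     (\<forall>i j t'. prefix t' t \<longrightarrow> (\<exists>w. buf src dst i j t' = Some w \<and> length w \<le> k))"

definition sync_word :: "'m list \<Rightarrow> 'm act list" where
  "sync_word as = concat (map (\<lambda>a. [Send a, Recv a]) as)"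

definition synchronous :: "'m act list \<Rightarrow> bool" where
  "synchronous t \<longleftrightarrow> (\<exists>as. t = sync_word as)"

definition traces ::
  "('m \<Rightarrow> nat) \<Rightarrow> ('m \<Rightarrow> nat) \<Rightarrow> (nat \<Rightarrow> 's) \<Rightarrow> (nat \<Rightarrow> ('s \<times> 'm act \<times> 's) set) \<Rightarrow>
   nat \<Rightarrow> 'm act list set" where
  "traces src dst q0 delta k =
     {t. (if k = 0 then synchronous t else bounded_fifo src dst k t) \<and>
         (\<exists>c. run src dst delta (init_config q0) t c)}"

definition stable_traces ::
  "nat \<Rightarrow> ('m \<Rightarrow> nat) \<Rightarrow> ('m \<Rightarrow> nat) \<Rightarrow> (nat \<Rightarrow> 's) \<Rightarrow> (nat \<Rightarrow> ('s \<times> 'm act \<times> 's) set) \<Rightarrow>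
   nat \<Rightarrow> ('m list + ('m list \<times> ('s, 'm) config)) set" where
  "stable_traces N src dst q0 delta k =
     {Inl (sends t) | t. t \<in> traces src dst q0 delta k} \<union>
     {Inr (sends t, c) | t c. run src dst delta (init_config q0) t c \<and> stable N c \<and>
                              t \<in> traces src dst q0 delta k}"

definition one_synchronizable ::
  "nat \<Rightarrow> ('m \<Rightarrow> nat) \<Rightarrow> ('m \<Rightarrow> nat) \<Rightarrow> (nat \<Rightarrow> 's) \<Rightarrow> (nat \<Rightarrow> ('s \<times> 'm act \<times> 's) set) \<Rightarrow> bool" where
  "one_synchronizable N src dst q0 delta \<longleftrightarrow>
     stable_traces N src dst q0 delta 0 = stable_traces N src dst q0 delta 1"

end

theory Submission
  imports Defs
begin

(* A synchronous trace followed by a single send is 1-bounded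
   FIFO, so by 1-synchronizability its send sequence is also that of a synchronous trace, which can
   only be tau !?a1. This synchronous run may resolve nondeterminism differently from the given run
   of tau !a1 ... !an; but both perform the same actions and so agree on all channel contents,
   hence taking the local state of the common sender from the given run and those of all other
   peers from the synchronous one is again a run of tau !?a1. As the receiver of a1 is not the
   sender, the sender is then still in the state from which it performed !a2 ... !an, and sends
   depend only on the sender's state; so tau !?a1 !a2 ... !an is a run and the induction proceeds. *)

lemma run_Nil_iff: "run src dst delta c [] c' \<longleftrightarrow> c' = c"
  by (auto intro: run_nil elim: run.cases)

lemma run_Cons_iff:
  "run src dst delta c (x # t) c'' \<longleftrightarrow> (\<exists>c'. step src dst delta c x c' \<and> run src dst delta c' t c'')"
  by (auto intro: run_cons elim: run.cases simp del: split_paired_Ex)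

lemma run_append_iff:
  "run src dst delta c (t1 @ t2) c'' \<longleftrightarrow>
     (\<exists>c'. run src dst delta c t1 c' \<and> run src dst delta c' t2 c'')"
  by (induction t1 arbitrary: c) (auto simp: run_Nil_iff run_Cons_iff simp del: split_paired_Ex)

inductive_cases step_SendE: "step src dst delta c (Send a) c'"
inductive_cases step_RecvE: "step src dst delta c (Recv a) c'"

lemma override_on_same [simp]: "override_on f f S = f"
  by (simp add: override_on_def)

lemma override_on_fun_upd:
  "override_on (f(x := a)) (g(x := b)) S = (override_on f g S)(x := if x \<in> S then b else a)"
  by (auto simp: override_on_def)

lemma step_override_on:
  assumes "step src dst delta c x c'" "step src dst delta d x d'" "snd c = snd d"
  shows "snd c' = snd d' \<and>
    step src dst delta (override_on (fst d) (fst c) S, snd c) x (override_on (fst d') (fst c') S, snd c')"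
  using assms(1)
proof cases
  case (send st a q w)
  with assms(2,3) obtain st' q' where "d = (st', w)" "d' = (st'(src a := q'), snd c')"
    "(st' (src a), Send a, q') \<in> delta (src a)"
    by (auto elim!: step_SendE)
  with send show ?thesis
    by (auto simp: override_on_fun_upd intro!: step.send)
next
  case (recv st a q w u)
  with assms(2,3) obtain st' q' where "d = (st', w)" "d' = (st'(dst a := q'), snd c')"
    "(st' (dst a), Recv a, q') \<in> delta (dst a)"
    by (auto elim!: step_RecvE)
  with recv show ?thesis
    by (auto simp: override_on_fun_upd intro!: step.recv)
qed

lemma run_override_on:
  assumes "run src dst delta c t c'" "run src dst delta d t d'" "snd c = snd d"
  shows "snd c' = snd d' \<and>
    run src dst delta (override_on (fst d) (fst c) S, snd c) t (override_on (fst d') (fst c') S, snd c')"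
  using assms
proof (induction arbitrary: d rule: run.induct)
  case (run_nil c)
  then show ?case by (simp add: run_Nil_iff)
next
  case (run_cons c x c1 t c'')
  from run_cons.prems(1) obtain d1 where "step src dst delta d x d1" and run1: "run src dst delta d1 t d'"
    by (auto simp: run_Cons_iff)
  with step_override_on[OF run_cons.hyps(1) _ run_cons.prems(2)]
  have "snd c1 = snd d1"
    and "step src dst delta (override_on (fst d) (fst c) S, snd c) x (override_on (fst d1) (fst c1) S, snd c1)"
    by blast+
  with run_cons.IH[OF run1] show ?case by (auto intro: run.run_cons)
qed

lemma run_map_Send_transfer:
  assumes "run src dst delta (st, w) (map Send as) c" "\<forall>a\<in>set as. src a = p" "st' p = st p"
  shows "\<exists>c'. run src dst delta (st', w') (map Send as) c'"
  using assms
proof (induction as arbitrary: st w st' w')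
  case Nil
  then show ?case by (auto intro: run.intros)
next
  case (Cons a as)
  have p: "src a = p" using Cons.prems(2) by simp
  from Cons.prems(1) obtain c1 where "step src dst delta (st, w) (Send a) c1"
    and run1: "run src dst delta c1 (map Send as) c"
    by (auto simp: run_Cons_iff)
  then obtain q where q: "(st p, Send a, q) \<in> delta p"
    and c1: "c1 = (st(p := q), w(p := (w p)(dst a := w p (dst a) @ [a])))"
    using p by (auto elim: step_SendE)
  let ?w' = "w'(p := (w' p)(dst a := w' p (dst a) @ [a]))"
  have "step src dst delta (st', w') (Send a) (st'(p := q), ?w')"
    using step.send[where st = st' and a = a and q' = q and delta = delta and src = src and dst = dst] p q Cons.prems(3) by simp
  moreover have "\<exists>c'. run src dst delta (st'(p := q), ?w') (map Send as) c'"
    by (rule Cons.IH[OF run1[unfolded c1]]) (use Cons.prems(2) in simp_all)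
  ultimately show ?case by (auto intro: run.run_cons simp del: split_paired_Ex)
qed

lemma sends_append [simp]: "sends (t1 @ t2) = sends t1 @ sends t2"
  by (induction t1 rule: sends.induct) auto

lemma recvs_append [simp]: "recvs (t1 @ t2) = recvs t1 @ recvs t2"
  by (induction t1 rule: recvs.induct) auto

lemma sync_word_simps [simp]:
  "sync_word [] = []"
  "sync_word (a # as) = Send a # Recv a # sync_word as"
  "sync_word (as @ bs) = sync_word as @ sync_word bs"
  by (simp_all add: sync_word_def)

lemma sends_sync_word [simp]: "sends (sync_word as) = as"
  by (induction as) auto

lemma recvs_sync_word [simp]: "recvs (sync_word as) = as"
  by (induction as) auto

lemma synchronous_iff: "synchronous t \<longleftrightarrow> t = sync_word (sends t)"
  by (auto simp: synchronous_def)

lemma bounded_fifoI: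
  assumes "\<And>t'. prefix t' t \<Longrightarrow> \<exists>r. sends t' = recvs t' @ r \<and> length r \<le> k"
  shows "bounded_fifo src dst k t"
  unfolding bounded_fifo_def
proof (intro allI impI)
  fix i j t' assume "prefix t' t"
  then obtain r where r: "sends t' = recvs t' @ r" "length r \<le> k" using assms by blast
  let ?r = "filter (\<lambda>a. src a = i \<and> dst a = j) r"
  have "sent_on src dst i j t' = recv_on src dst i j t' @ ?r"
    unfolding sent_on_def recv_on_def using r(1) by simp
  then have "buf src dst i j t' = Some ?r"
    unfolding buf_def by auto
  moreover have "length ?r \<le> k" using r(2) by (meson le_trans length_filter_le)
  ultimately show "\<exists>w. buf src dst i j t' = Some w \<and> length w \<le> k" by blast
qed

lemma prefix_sync_word_backlog:
  "prefix t' (sync_word as) \<Longrightarrow> \<exists>r. sends t' = recvs t' @ r \<and> length r \<le> 1"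
proof (induction as arbitrary: t')
  case Nil
  then show ?case by auto
next
  case (Cons a as)
  then consider "t' = []" | "t' = [Send a]" | t'' where "t' = Send a # Recv a # t''" "prefix t'' (sync_word as)"
    by (auto simp: prefix_Cons)
  then show ?case
    by cases (use Cons.IH in auto)
qed

lemma bounded_fifo_sync_word_Send: "bounded_fifo src dst 1 (sync_word as @ [Send a])"
proof (rule bounded_fifoI)
  fix t' assume "prefix t' (sync_word as @ [Send a])"
  then consider "prefix t' (sync_word as)" | "t' = sync_word as @ [Send a]"
    by (auto simp: prefix_append prefix_Cons)
  then show "\<exists>r. sends t' = recvs t' @ r \<and> length r \<le> 1"
  proof cases
    case 1
    then show ?thesis by (rule prefix_sync_word_backlog)
  qed simp
qed

lemma one_synchronizable_receive:
  assumes "one_synchronizable N src dst q0 delta"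
    and "run src dst delta (init_config q0) (sync_word as @ [Send a]) c"
  shows "\<exists>d. run src dst delta (init_config q0) (sync_word (as @ [a])) d"
proof -
  have "sync_word as @ [Send a] \<in> traces src dst q0 delta 1"
    using assms(2) bounded_fifo_sync_word_Send[of src dst as a]
    by (simp add: traces_def del: split_paired_Ex) blast
  then have "Inl (as @ [a]) \<in> stable_traces N src dst q0 delta 1"
    unfolding stable_traces_def by force
  then have "Inl (as @ [a]) \<in> stable_traces N src dst q0 delta 0"
    using assms(1) unfolding one_synchronizable_def by simp
  then obtain t where "t \<in> traces src dst q0 delta 0" and "sends t = as @ [a]"
    unfolding stable_traces_def by auto
  then show ?thesis
    by (auto simp: traces_def synchronous_iff)
qed

lemma run_receive_keeping_peer:
  assumes "run src dst delta c0 t c" "run src dst delta c0 (t @ [Recv a]) d" "dst a \<noteq> p"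
  shows "\<exists>e. run src dst delta c0 (t @ [Recv a]) e \<and> fst e p = fst c p"
proof -
  obtain d1 where run_d1: "run src dst delta c0 t d1" and "step src dst delta d1 (Recv a) d"
    using assms(2) by (auto simp: run_append_iff run_Cons_iff run_Nil_iff)
  then obtain q u where q: "(fst d1 (dst a), Recv a, q) \<in> delta (dst a)"
    and u: "snd d1 (src a) (dst a) = a # u"
    by (auto elim: step_RecvE)
  let ?st = "override_on (fst d1) (fst c) {p}"
  from run_override_on[OF assms(1) run_d1, of "{p}"]
  have "snd c = snd d1" and "run src dst delta c0 t (?st, snd c)"
    by auto
  moreover have "step src dst delta (?st, snd c) (Recv a)
      (?st(dst a := q), (snd c)(src a := (snd c (src a))(dst a := u)))"
    by (rule step.recv) (use q u assms(3) \<open>snd c = snd d1\<close> in simp_all)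
  ultimately show ?thesis
    using assms(3) by (force simp: run_append_iff run_Cons_iff run_Nil_iff)
qed

lemma one_synchronizable_single_sender_sends:
  assumes "one_synchronizable N src dst q0 delta"
    and "\<forall>a\<in>set as. src a = p \<and> dst a \<noteq> p"
    and "run src dst delta (init_config q0) (sync_word bs @ map Send as) c"
  shows "\<exists>c'. run src dst delta (init_config q0) (sync_word (bs @ as)) c'"
  using assms(2,3)
proof (induction as arbitrary: bs c)
  case Nil
  then show ?case by (auto simp del: split_paired_Ex)
next
  case (Cons a as)
  let ?c0 = "init_config q0"
  have "run src dst delta ?c0 ((sync_word bs @ [Send a]) @ map Send as) c"
    using Cons.prems(2) by simp
  then obtain c1 where run_c1: "run src dst delta ?c0 (sync_word bs @ [Send a]) c1"
    and sends_c1: "run src dst delta c1 (map Send as) c"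
    unfolding run_append_iff by blast
  obtain d where "run src dst delta ?c0 ((sync_word bs @ [Send a]) @ [Recv a]) d"
    using one_synchronizable_receive[OF assms(1) run_c1] by auto
  then obtain e where run_e: "run src dst delta ?c0 (sync_word (bs @ [a])) e"
    and "fst e p = fst c1 p"
    using run_receive_keeping_peer[OF run_c1, of a d p] Cons.prems(1) by auto
  then obtain c' where "run src dst delta e (map Send as) c'"
    using run_map_Send_transfer[of src dst delta "fst c1" "snd c1" as c p "fst e" "snd e"]
      sends_c1 Cons.prems(1) by auto
  with run_e have "run src dst delta ?c0 (sync_word (bs @ [a]) @ map Send as) c'"
    unfolding run_append_iff by blast
  then show ?case
    using Cons.IH[of "bs @ [a]"] Cons.prems(1) by auto
qed

theorem lemma4p4:
  fixes Msgs :: "'m set" and N :: nat and src dst :: "'m \<Rightarrow> nat"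
    and Q :: "nat \<Rightarrow> 's set" and q0 :: "nat \<Rightarrow> 's"
    and delta :: "nat \<Rightarrow> ('s \<times> 'm act \<times> 's) set"
    and \<tau> :: "'m act list" and as :: "'m list"
  assumes "system Msgs N src dst Q q0 delta"
    and "one_synchronizable N src dst q0 delta"
    and "\<tau> \<in> traces src dst q0 delta 0"
    and "set as \<subseteq> Msgs"
    and "\<tau> @ map Send as \<in> traces src dst q0 delta (length as)"
    and "\<forall>i < length as. \<forall>j < length as. src (as ! i) = src (as ! j)"
  shows "\<tau> @ sync_word as \<in> traces src dst q0 delta 0"
proof -
  obtain bs where \<tau>: "\<tau> = sync_word bs"
    using assms(3) by (auto simp: traces_def synchronous_def)
  have "\<forall>a\<in>set as. src a = src (hd as) \<and> dst a \<noteq> src (hd as)"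
  proof
    fix a assume "a \<in> set as"
    moreover have "src a \<noteq> dst a"
      using assms(1,4) \<open>a \<in> set as\<close> by (auto simp: system_def message_set_def)
    ultimately show "src a = src (hd as) \<and> dst a \<noteq> src (hd as)"
      using assms(6) by (metis hd_conv_nth in_set_conv_nth length_greater_0_conv list.size(3) not_less0)
  qed
  moreover obtain c where "run src dst delta (init_config q0) (sync_word bs @ map Send as) c"
    using assms(5) \<tau> by (auto simp: traces_def)
  ultimately obtain c' where "run src dst delta (init_config q0) (sync_word (bs @ as)) c'"
    using one_synchronizable_single_sender_sends[OF assms(2)] by blast
  moreover have "synchronous (\<tau> @ sync_word as)"
    unfolding synchronous_def \<tau> sync_word_simps(3)[symmetric] by blast
  ultimately show ?thesis
    using \<tau> unfolding traces_def by (auto simp del: split_paired_Ex)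
qed

end
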